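(* Let $\mathfrak g(V,\omega,D)$ be a generalized oscillator algebra satisfying (C1) $Q(x,y):=\omega(Dx,y)$ is positive definite, (C2) all functionals $\omega(x,\cdot)$, $x\in V$, are $Q$-continuous, and (C3) the map $\eta:V\to V_Q$, $Q(\eta(x),y)=\omega(x,y)$, is continuous, where $V_Q$ is the Hilbert completion of $(V,Q)$ containing $V$ as a dense subspace. Put $\kappa(x,y):=Q(\eta(x),\eta(y))$ for $x,y\in V$, and let $\overline D$ denote the closure in $V_Q$ of $D$ regarded as an unbounded operator with domain $V$. Then $\eta(V)$ lies in the domain of $\overline D$, the map $\eta:(V,\kappa)\to(\eta(V),Q)$ is isometric and extends to an isomorphism $\hat\eta:V_\kappa\to V_Q$ of real Hilbert spaces, and $\eta$ intertwines the unbounded operator $D:V\to V_\kappa$ with the operator $\overline D|_{\eta(V)}=\eta^{-1}:\eta(V)\to V\subseteq V_Q$. Moreover, the closure of $D$ in $V_\kappa$ is injective with dense range.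
   Context: $(V,\omega)$: real locally convex space with continuous non-degenerate alternating form $\omega$; $\gamma:\mathbb R\to\mathrm{Sp}(V,\omega)$ defines a smooth action, $D=\gamma'(0)$; $\mathfrak g(V,\omega,D)=\mathbb R\times V\times\mathbb R$ with bracket $[(z,v,t),(z',v',t')]=(\omega(v,v'),tDv'-t'Dv,0)$. A linear form $\beta$ on $V$ is $Q$-continuous if $\sup\{\beta(v):Q(v,v)\le1\}<\infty$. $V_\kappa$ denotes the Hilbert completion of $(V,\kappa)$. *)

theory Defs
  imports "HOL-Analysis.Analysis"
begin

text \<open>Real locally convex (Hausdorff) topological vector spaces: the type carries a
topology (Hausdorffness is imposed via the class t2_space in the statement) such that
addition and scalar multiplication are jointly continuous and 0 has a neighbourhood
base of convex open sets.\<close>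

definition locally_convex :: "'a::{real_vector,topological_space} itself \<Rightarrow> bool" where
  "locally_convex _ \<longleftrightarrow>
     continuous_on UNIV (\<lambda>p::'a \<times> 'a. fst p + snd p) \<and>
     continuous_on UNIV (\<lambda>p::real \<times> 'a. fst p *\<^sub>R snd p) \<and>
     (\<forall>W::'a set. open W \<and> 0 \<in> W \<longrightarrow> (\<exists>C. open C \<and> convex C \<and> 0 \<in> C \<and> C \<subseteq> W))"

fun iter_dd :: "('a::real_vector \<Rightarrow> 'b::{real_vector,t2_space}) \<Rightarrow> 'a list \<Rightarrow> 'a \<Rightarrow> 'b" where
  "iter_dd f [] x = f x"
| "iter_dd f (h # hs) x =
     Lim (at (0::real)) (\<lambda>t. (1 / t) *\<^sub>R (iter_dd f hs (x + t *\<^sub>R h) - iter_dd f hs x))"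

definition iter_dd_exists :: "('a::real_vector \<Rightarrow> 'b::{real_vector,t2_space}) \<Rightarrow> 'a \<Rightarrow> 'a list \<Rightarrow> 'a \<Rightarrow> bool" where
  "iter_dd_exists f h hs x \<longleftrightarrow>
     (\<exists>y. ((\<lambda>t::real. (1 / t) *\<^sub>R (iter_dd f hs (x + t *\<^sub>R h) - iter_dd f hs x)) \<longlongrightarrow> y) (at 0))"

text \<open>Joint continuity of (x, h1, ..., hj) \<mapsto> d^(j) f(x)(h1,...,hj) on E \<times> E^j
  (product topology, written out with basic open boxes).\<close>
definition iter_dd_continuous :: "('a::{real_vector,topological_space} \<Rightarrow> 'b::{real_vector,t2_space}) \<Rightarrow> nat \<Rightarrow> bool" where
  "iter_dd_continuous f j \<longleftrightarrow>
     (\<forall>x hs W. length hs = j \<and> open W \<and> iter_dd f hs x \<in> W \<longrightarrow>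
        (\<exists>U Us. open U \<and> x \<in> U \<and> list_all2 (\<lambda>h S. open S \<and> h \<in> S) hs Us \<and>
           (\<forall>x' hs'. x' \<in> U \<and> list_all2 (\<in>) hs' Us \<longrightarrow> iter_dd f hs' x' \<in> W)))"

definition bastiani_C :: "nat \<Rightarrow> ('a::{real_vector,topological_space} \<Rightarrow> 'b::{real_vector,t2_space}) \<Rightarrow> bool" where
  "bastiani_C k f \<longleftrightarrow>
     (\<forall>h hs x. length hs < k \<longrightarrow> iter_dd_exists f h hs x) \<and>
     (\<forall>j\<le>k. iter_dd_continuous f j)"

definition bastiani_smooth :: "('a::{real_vector,topological_space} \<Rightarrow> 'b::{real_vector,t2_space}) \<Rightarrow> bool" where
  "bastiani_smooth f \<longleftrightarrow> (\<forall>k. bastiani_C k f)"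

definition symplectic_group :: "('a::{real_vector,topological_space} \<Rightarrow> 'a \<Rightarrow> real) \<Rightarrow> ('a \<Rightarrow> 'a) set" where
  "symplectic_group \<omega> = {g. linear g \<and> bij g \<and> continuous_on UNIV g \<and> continuous_on UNIV (inv g) \<and>
                            (\<forall>x y. \<omega> (g x) (g y) = \<omega> x y)}"

definition smooth_symplectic_action :: "('a::{real_vector,t2_space} \<Rightarrow> 'a \<Rightarrow> real) \<Rightarrow> (real \<Rightarrow> 'a \<Rightarrow> 'a) \<Rightarrow> bool" where
  "smooth_symplectic_action \<omega> \<gamma> \<longleftrightarrow>
     (\<forall>t. \<gamma> t \<in> symplectic_group \<omega>) \<and> \<gamma> 0 = id \<and> (\<forall>s t. \<gamma> (s + t) = \<gamma> s \<circ> \<gamma> t) \<and>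
     bastiani_smooth (\<lambda>p::real \<times> 'a. \<gamma> (fst p) (snd p))"

text \<open>Graph of an operator A with domain the image of the embedding \<iota> (A v is given on
  the elements of V), closure of that graph in the Hilbert space.\<close>
definition closure_graph :: "('v \<Rightarrow> 'h::real_normed_vector) \<Rightarrow> ('v \<Rightarrow> 'v) \<Rightarrow> ('h \<times> 'h) set" where
  "closure_graph \<iota> A = closure {(\<iota> v, \<iota> (A v)) | v. True}"

definition single_valued_rel :: "('h \<times> 'h) set \<Rightarrow> bool" where
  "single_valued_rel G \<longleftrightarrow> (\<forall>a b c. (a, b) \<in> G \<and> (a, c) \<in> G \<longrightarrow> b = c)"

definition injective_rel :: "('h \<times> 'h) set \<Rightarrow> bool" where
  "injective_rel G \<longleftrightarrow> (\<forall>a a' b. (a, b) \<in> G \<and> (a', b) \<in> G \<longrightarrow> a = a')"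

end

theory Submission
  imports Defs
begin

(*
  Differentiating the flow shows that D is Q-skew-symmetric and that eta (D w) = w in V_Q.
  The analytic core is that D + 1 and D - 1 have dense range in V_Q: if c is Q-orthogonal to
  (D + s) V with s ~= 0, then g t = Q(c, gamma_t v) satisfies g' = -s g, and g is bounded since
  every gamma_t is Q-isometric, so g = 0.  Hence the closure of D is skew-adjoint and contains
  every pair (z, y) with Q(y, v) = -Q(z, D v) for all v, in particular (eta x, x).
  Since kappa is the pull-back of Q along eta and eta(V) contains V, eta extends to a unitary
  map V_kappa -> V_Q; transporting the density of V = eta(D V) back shows that D V is dense in
  V_kappa, which makes the closure of D in V_kappa injective with dense range.
*)

lemma continuous_on_eq_on_dense:
  fixes f g :: "'a::topological_space \<Rightarrow> 'b::t2_space"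
  assumes "closure S = UNIV" "continuous_on UNIV f" "continuous_on UNIV g"
    and "\<And>x. x \<in> S \<Longrightarrow> f x = g x"
  shows "f x = g x"
proof -
  have "closure S \<subseteq> {x. f x = g x}"
    using assms(4) by (intro closure_minimal closed_Collect_eq assms(2,3)) auto
  then show ?thesis using assms(1) by auto
qed

lemma subspace_closure:
  fixes S :: "'a::real_normed_vector set"
  assumes "subspace S"
  shows "subspace (closure S)"
proof -
  have "(\<lambda>p. fst p + snd p) ` closure (S \<times> S) \<subseteq> closure S"
    using assms by (intro image_closure_subset continuous_intros)
      (force simp: subspace_def intro: subsetD[OF closure_subset])+
  moreover have "(\<lambda>x. c *\<^sub>R x) ` closure S \<subseteq> closure S" for c
    using assms by (intro image_closure_subset continuous_intros)
      (force simp: subspace_def intro: subsetD[OF closure_subset])+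
  ultimately show ?thesis
    using assms closure_subset unfolding subspace_def
    by (fastforce simp: closure_Times image_subset_iff)
qed

lemma orthogonal_dense_imp_zero:
  fixes c :: "'a::real_inner"
  assumes "closure S = UNIV" "\<And>y. y \<in> S \<Longrightarrow> inner c y = 0"
  shows "c = 0"
proof -
  have "continuous_on UNIV (inner c)"
    by (intro continuous_intros)
  then have "inner c c = 0"
    using continuous_on_eq_on_dense[OF assms(1), of "inner c" "\<lambda>_. 0"] assms(2) by auto
  then show ?thesis by simp
qed

lemma nearest_point_exists:
  fixes M :: "'a::{real_inner,complete_space} set"
  assumes "closed M" "convex M" "M \<noteq> {}"
  obtains m where "m \<in> M" "\<And>w. w \<in> M \<Longrightarrow> norm (y - m) \<le> norm (y - w)"
proof -
  define d where "d = Inf ((\<lambda>z. norm (y - z)) ` M)"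
  have d_le: "d \<le> norm (y - z)" if "z \<in> M" for z
    unfolding d_def by (rule cInf_lower) (use that in \<open>auto intro: bdd_belowI[of _ 0]\<close>)
  have d_nonneg: "0 \<le> d"
    unfolding d_def using assms(3) by (intro cInf_greatest) auto
  have "\<exists>z\<in>M. (norm (y - z))\<^sup>2 < d\<^sup>2 + 1 / (real n + 1)" for n
  proof -
    have "d < sqrt (d\<^sup>2 + 1 / (real n + 1))"
      using d_nonneg real_sqrt_less_mono[of "d\<^sup>2" "d\<^sup>2 + 1 / (real n + 1)"] by simp
    then obtain z where "z \<in> M" "norm (y - z) < sqrt (d\<^sup>2 + 1 / (real n + 1))"
      using cInf_lessD[of "(\<lambda>z. norm (y - z)) ` M"] assms(3) unfolding d_def by fastforce
    moreover have "(norm (y - z))\<^sup>2 < (sqrt (d\<^sup>2 + 1 / (real n + 1)))\<^sup>2"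
      by (rule power_strict_mono) (use calculation in auto)
    ultimately show ?thesis by auto
  qed
  then obtain z where z_in: "\<And>n. z n \<in> M"
    and z_near: "\<And>n. (norm (y - z n))\<^sup>2 < d\<^sup>2 + 1 / (real n + 1)"
    by metis
  \<comment> \<open>parallelogram law at the midpoint of z n and z k, which lies in M\<close>
  have z_close: "(norm (z n - z k))\<^sup>2 \<le> 2 / (real n + 1) + 2 / (real k + 1)" for n k
  proof -
    have "(1/2) *\<^sub>R (z n + z k) \<in> M"
      using convexD[OF assms(2) z_in z_in, of "1/2" "1/2"] by (simp add: scaleR_right_distrib)
    then have "d\<^sup>2 \<le> (norm (y - (1/2) *\<^sub>R (z n + z k)))\<^sup>2"
      using d_le d_nonneg by (simp add: power_mono)
    moreover have "(norm (z n - z k))\<^sup>2 = 2 * (norm (y - z n))\<^sup>2 + 2 * (norm (y - z k))\<^sup>2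
        - 4 * (norm (y - (1/2) *\<^sub>R (z n + z k)))\<^sup>2"
      unfolding power2_norm_eq_inner by (simp add: inner_simps algebra_simps)
    ultimately show ?thesis using z_near[of n] z_near[of k] by linarith
  qed
  have "Cauchy z"
  proof (rule metric_CauchyI)
    fix e :: real assume "0 < e"
    obtain N :: nat where N: "4 / e\<^sup>2 < real N"
      using reals_Archimedean2 by blast
    have "dist (z n) (z k) < e" if "N \<le> n" "N \<le> k" for n k
    proof -
      have "2 / (real n + 1) \<le> 2 / (real N + 1)" "2 / (real k + 1) \<le> 2 / (real N + 1)"
        using that by (auto simp: frac_le)
      then have "2 / (real n + 1) + 2 / (real k + 1) \<le> 4 / (real N + 1)"
        by linarith
      also have "\<dots> < e\<^sup>2"
      proof -
        have "4 / e\<^sup>2 < real N + 1"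
          using N by linarith
        then have "4 < (real N + 1) * e\<^sup>2"
          using \<open>0 < e\<close> by (simp add: pos_divide_less_eq)
        then show ?thesis by (simp add: pos_divide_less_eq mult.commute)
      qed
      finally have "(norm (z n - z k))\<^sup>2 < e\<^sup>2"
        using z_close[of n k] by linarith
      then show ?thesis
        using \<open>0 < e\<close> by (simp add: dist_norm power_less_imp_less_base)
    qed
    then show "\<exists>N. \<forall>n\<ge>N. \<forall>k\<ge>N. dist (z n) (z k) < e" by blast
  qed
  then obtain m where "z \<longlonglongrightarrow> m"
    using convergent_eq_Cauchy by blast
  show thesis
  proof
    show "m \<in> M" using assms(1) z_in \<open>z \<longlonglongrightarrow> m\<close> closed_sequential_limits by blast
    fix w assume "w \<in> M"
    have "(norm (y - m))\<^sup>2 \<le> (norm (y - w))\<^sup>2"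
    proof (rule LIMSEQ_le)
      show "(\<lambda>n. (norm (y - z n))\<^sup>2) \<longlonglongrightarrow> (norm (y - m))\<^sup>2"
        by (intro tendsto_intros \<open>z \<longlonglongrightarrow> m\<close>)
      show "(\<lambda>n. (norm (y - w))\<^sup>2 + 1 / (real n + 1)) \<longlonglongrightarrow> (norm (y - w))\<^sup>2"
        using tendsto_add[OF tendsto_const LIMSEQ_inverse_real_of_nat, of "(norm (y - w))\<^sup>2"]
        by (simp add: inverse_eq_divide add.commute)
      have "d\<^sup>2 \<le> (norm (y - w))\<^sup>2"
        using d_le[OF \<open>w \<in> M\<close>] d_nonneg by (simp add: power_mono)
      then show "\<exists>N. \<forall>n\<ge>N. (norm (y - z n))\<^sup>2 \<le> (norm (y - w))\<^sup>2 + 1 / (real n + 1)"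
      proof (intro exI allI impI)
        fix n :: nat
        show "(norm (y - z n))\<^sup>2 \<le> (norm (y - w))\<^sup>2 + 1 / (real n + 1)"
          using z_near[of n] \<open>d\<^sup>2 \<le> _\<close> by linarith
      qed
    qed
    then show "norm (y - m) \<le> norm (y - w)"
      by (rule power2_le_imp_le) simp
  qed
qed

lemma nearest_point_subspace_orthogonal:
  fixes M :: "'a::real_inner set"
  assumes "subspace M" "m \<in> M" "\<And>w. w \<in> M \<Longrightarrow> norm (y - m) \<le> norm (y - w)" "w \<in> M"
  shows "inner (y - m) w = 0"
proof -
  define p where "p = inner (y - m) w"
  define t where "t = p / ((norm w)\<^sup>2 + 1)"
  have "m + t *\<^sub>R w \<in> M"
    using assms(1,2,4) by (simp add: subspace_add subspace_scale)
  then have "(norm (y - m))\<^sup>2 \<le> (norm (y - (m + t *\<^sub>R w)))\<^sup>2"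
    using assms(3) by (simp add: power_mono)
  also have "\<dots> = (norm (y - m))\<^sup>2 - 2 * t * p + t\<^sup>2 * (norm w)\<^sup>2"
    unfolding power2_norm_eq_inner p_def
    by (simp add: inner_simps algebra_simps power2_eq_square inner_commute)
  finally have "t * (2 * p - t * (norm w)\<^sup>2) \<le> 0"
    by (simp add: power2_eq_square algebra_simps)
  moreover have "2 * p - t * (norm w)\<^sup>2 = t * ((norm w)\<^sup>2 + 2)"
  proof -
    have "1 + (norm w)\<^sup>2 \<noteq> 0"
      by (smt (verit) zero_le_power2)
    then show ?thesis unfolding t_def by (simp add: field_simps)
  qed
  ultimately have "t\<^sup>2 * ((norm w)\<^sup>2 + 2) \<le> 0"
    by (simp add: power2_eq_square mult.assoc)
  moreover have "0 < (norm w)\<^sup>2 + 2"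
    by (simp add: add_nonneg_pos)
  ultimately have "t\<^sup>2 \<le> 0"
    by (simp add: mult_le_0_iff)
  then have "t = 0"
    by simp
  then show ?thesis
    unfolding t_def p_def by (smt (verit) divide_eq_0_iff zero_le_power2)
qed

lemma subspace_dense_iff_orthogonal_zero:
  fixes S :: "'a::{real_inner,complete_space} set"
  assumes "subspace S"
  shows "closure S = UNIV \<longleftrightarrow> (\<forall>c. (\<forall>y\<in>S. inner c y = 0) \<longrightarrow> c = 0)"
proof
  assume "closure S = UNIV"
  then show "\<forall>c. (\<forall>y\<in>S. inner c y = 0) \<longrightarrow> c = 0"
    using orthogonal_dense_imp_zero by blast
next
  assume orth: "\<forall>c. (\<forall>y\<in>S. inner c y = 0) \<longrightarrow> c = 0"
  have "y \<in> closure S" for y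
  proof -
    have sub: "subspace (closure S)" using assms by (rule subspace_closure)
    have "convex (closure S)" "closure S \<noteq> {}"
      using subspace_imp_convex[OF sub] subspace_0[OF sub] by auto
    then obtain m where m: "m \<in> closure S"
      and near: "\<And>w. w \<in> closure S \<Longrightarrow> norm (y - m) \<le> norm (y - w)"
      using nearest_point_exists[OF closed_closure] by metis
    have "\<forall>w\<in>S. inner (y - m) w = 0"
      using nearest_point_subspace_orthogonal[OF sub m near] closure_subset by auto
    then have "y - m = 0"
      using orth by blast
    then show ?thesis using m by simp
  qed
  then show "closure S = UNIV" by blast
qed

lemma bij_if_inner_preserving_dense_range:
  fixes g :: "'a::{real_inner,complete_space} \<Rightarrow> 'b::real_inner"
  assumes "linear g" "\<And>u w. inner (g u) (g w) = inner u w" "closure (range g) = UNIV"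
  shows "bij g"
proof -
  have norm_g: "norm (g u) = norm u" for u
    using assms(2) by (simp add: norm_eq_sqrt_inner)
  have "inj g"
    using norm_g linear_diff[OF assms(1)]
    by (metis injI norm_eq_zero right_minus_eq)
  moreover have "bounded_linear g"
    using assms(1) norm_g by (intro bounded_linear_intro[of _ 1]) (simp_all add: linear_add linear_scale)
  then have "complete (range g)"
    using norm_g by (intro complete_isometric_image[of 1]) (simp_all add: subspace_UNIV complete_UNIV)
  then have "surj g"
    using assms(3) complete_imp_closed closure_closed by metis
  ultimately show ?thesis by (simp add: bij_def)
qed

lemma continuous_extension_linear_inner_preserving:
  fixes \<iota> :: "'v::real_vector \<Rightarrow> 'k::real_inner" and \<eta> :: "'v \<Rightarrow> 'h::real_inner"
  assumes "linear \<iota>" "linear \<eta>" "\<And>x y. inner (\<iota> x) (\<iota> y) = inner (\<eta> x) (\<eta> y)"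
    and "closure (range \<iota>) = UNIV"
    and cont_g: "continuous_on UNIV g" and g_\<iota>: "\<And>x. g (\<iota> x) = \<eta> x"
  shows "linear g" "inner (g u) (g w) = inner u w"
proof -
  have dense2: "closure (range \<iota> \<times> range \<iota>) = UNIV"
    and dense_scale: "closure ((UNIV :: real set) \<times> range \<iota>) = UNIV"
    using assms(4) by (simp_all add: closure_Times)
  have add: "g (u + w) = g u + g w" for u w
    using continuous_on_eq_on_dense[OF dense2,
        of "\<lambda>p. g (fst p + snd p)" "\<lambda>p. g (fst p) + g (snd p)" "(u, w)"] cont_g
    by (force intro!: continuous_intros continuous_on_compose2[OF cont_g]
        simp: g_\<iota> linear_add[OF assms(1), symmetric] linear_add[OF assms(2)])
  have scale: "g (r *\<^sub>R u) = r *\<^sub>R g u" for r u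
    using continuous_on_eq_on_dense[OF dense_scale,
        of "\<lambda>p. g (fst p *\<^sub>R snd p)" "\<lambda>p. fst p *\<^sub>R g (snd p)" "(r, u)"] cont_g
    by (force intro!: continuous_intros continuous_on_compose2[OF cont_g]
        simp: g_\<iota> linear_scale[OF assms(1), symmetric] linear_scale[OF assms(2)])
  show "linear g"
    by (intro linearI add scale)
  show "inner (g u) (g w) = inner u w"
    using continuous_on_eq_on_dense[OF dense2,
        of "\<lambda>p. inner (g (fst p)) (g (snd p))" "\<lambda>p. inner (fst p) (snd p)" "(u, w)"] cont_g
    by (force intro!: continuous_intros continuous_on_compose2[OF cont_g] simp: g_\<iota> assms(3))
qed

lemma unitary_extension:
  fixes \<iota> :: "'v::real_vector \<Rightarrow> 'k::{real_inner,complete_space}"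
    and \<eta> :: "'v \<Rightarrow> 'h::{real_inner,complete_space}"
  assumes "linear \<iota>" "linear \<eta>" "\<And>x y. inner (\<iota> x) (\<iota> y) = inner (\<eta> x) (\<eta> y)"
    and "closure (range \<iota>) = UNIV" "closure (range \<eta>) = UNIV"
  obtains g where "linear g" "bij g" "\<And>u w. inner (g u) (g w) = inner u w"
    "\<And>x. g (\<iota> x) = \<eta> x"
proof -
  have same_dist: "norm (\<eta> x - \<eta> y) = norm (\<iota> x - \<iota> y)" for x y
    using assms(3)[of "x - y" "x - y"]
    by (simp add: norm_eq_sqrt_inner linear_diff[OF assms(1)] linear_diff[OF assms(2)])
  define f where "f u = \<eta> (SOME x. \<iota> x = u)" for u
  have f_\<iota>: "f (\<iota> x) = \<eta> x" for x
  proof -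
    have "\<iota> (SOME x'. \<iota> x' = \<iota> x) = \<iota> x"
      by (rule someI) (rule refl)
    then show ?thesis
      using same_dist[of "SOME x'. \<iota> x' = \<iota> x" x] unfolding f_def by simp
  qed
  have "uniformly_continuous_on (range \<iota>) f"
    unfolding uniformly_continuous_on_def by (force simp: f_\<iota> dist_norm same_dist)
  then obtain g where "uniformly_continuous_on (closure (range \<iota>)) g"
    and g_f: "\<And>u. u \<in> range \<iota> \<Longrightarrow> f u = g u"
    by (rule uniformly_continuous_on_extension_on_closure) blast
  then have cont_g: "continuous_on UNIV g"
    using assms(4) uniformly_continuous_imp_continuous by metis
  have g_\<iota>: "g (\<iota> x) = \<eta> x" for x
    using g_f f_\<iota> by auto
  note g = continuous_extension_linear_inner_preserving[OF assms(1-4) cont_g g_\<iota>]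
  have "range \<eta> \<subseteq> range g"
    using g_\<iota> by (metis image_subsetI rangeI)
  then have "closure (range g) = UNIV"
    using closure_mono assms(5) by blast
  then show thesis
    using that g g_\<iota> bij_if_inner_preserving_dense_range by blast
qed

lemma dense_if_inner_preserving_image_dense:
  fixes g :: "'a::{real_inner,complete_space} \<Rightarrow> 'b::real_inner"
  assumes "linear g" "\<And>u w. inner (g u) (g w) = inner u w"
    and "subspace S" "closure (g ` S) = UNIV"
  shows "closure S = UNIV"
  unfolding subspace_dense_iff_orthogonal_zero[OF assms(3)]
proof (intro allI impI)
  fix c assume "\<forall>y\<in>S. inner c y = 0"
  then have "inner (g c) y = 0" if "y \<in> g ` S" for y
    using that assms(2) by auto
  then have "g c = 0"
    by (rule orthogonal_dense_imp_zero[OF assms(4)])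
  then show "c = 0"
    using assms(2)[of c c] by simp
qed

lemma bounded_solution_of_linear_ode_eq_0:
  fixes g :: "real \<Rightarrow> real"
  assumes "a \<noteq> 0" and deriv: "\<And>t. (g has_real_derivative a * g t) (at t)"
    and bounded: "\<And>t. \<bar>g t\<bar> \<le> M"
  shows "g t = 0"
proof (rule ccontr)
  assume "g t \<noteq> 0"
  have "((\<lambda>u. exp (- a * u) * g u) has_real_derivative 0) (at u)" for u
    using deriv[of u] by (auto intro!: derivative_eq_intros)
  then have "exp (- a * u) * g u = exp (- a * t) * g t" for u
    using DERIV_isconst_all by blast
  then have growth: "g u = exp (a * (u - t)) * g t" for u
    by (simp add: exp_minus field_simps exp_diff)
  define u where "u = t + ln ((\<bar>M\<bar> + 1) / \<bar>g t\<bar>) / a"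
  have "exp (a * (u - t)) = (\<bar>M\<bar> + 1) / \<bar>g t\<bar>"
    unfolding u_def using \<open>a \<noteq> 0\<close> \<open>g t \<noteq> 0\<close> by (simp add: add_pos_nonneg)
  then have "\<bar>g u\<bar> = \<bar>M\<bar> + 1"
    using growth[of u] \<open>g t \<noteq> 0\<close> by (simp add: abs_mult)
  then show False
    using bounded[of u] by linarith
qed

lemma tendsto_diff_locally_convex:
  assumes "locally_convex TYPE('v::{real_vector,topological_space})"
    and "(f \<longlongrightarrow> (a::'v)) F" "(g \<longlongrightarrow> b) F"
  shows "((\<lambda>x. f x - g x) \<longlongrightarrow> a - b) F"
proof -
  have add: "continuous_on UNIV (\<lambda>p::'v \<times> 'v. fst p + snd p)"
    and scale: "continuous_on UNIV (\<lambda>p::real \<times> 'v. fst p *\<^sub>R snd p)"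
    using assms(1) unfolding locally_convex_def by blast+
  have "((\<lambda>x. (-1::real) *\<^sub>R g x) \<longlongrightarrow> (-1) *\<^sub>R b) F"
    using continuous_on_tendsto_compose[OF scale
        tendsto_Pair[OF tendsto_const[of "-1 :: real"] assms(3)]]
    by simp
  from continuous_on_tendsto_compose[OF add tendsto_Pair[OF assms(2) this]]
  show ?thesis by simp
qed

locale skew_operator =
  fixes \<iota> :: "'v::real_vector \<Rightarrow> 'a::{real_inner,complete_space}" and A :: "'v \<Rightarrow> 'v"
  assumes linear_embedding: "linear \<iota>" and linear_operator: "linear A"
    and skew: "\<And>w v. inner (\<iota> (A w)) (\<iota> v) = - inner (\<iota> w) (\<iota> (A v))"
    and dense_embedding: "closure (range \<iota>) = UNIV"
begin

abbreviation "G \<equiv> closure_graph \<iota> A"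

lemma graph_in_closure_graph: "(\<iota> v, \<iota> (A v)) \<in> G"
  unfolding closure_graph_def by (rule closure_subset[THEN subsetD]) auto

lemma subspace_closure_graph: "subspace G"
proof -
  have "linear (\<lambda>v. (\<iota> v, \<iota> (A v)))"
    using linear_embedding linear_operator
    by (intro linearI) (simp_all add: linear_add linear_scale)
  moreover have "{(\<iota> v, \<iota> (A v)) | v. True} = range (\<lambda>v. (\<iota> v, \<iota> (A v)))"
    by auto
  ultimately show ?thesis
    unfolding closure_graph_def by (metis linear_subspace_image subspace_UNIV subspace_closure)
qed

lemma closure_graph_closed_property:
  assumes "closed {p. P p}" "\<And>v. P (\<iota> v, \<iota> (A v))" "p \<in> G"
  shows "P p"
proof -
  have "G \<subseteq> {p. P p}"
    unfolding closure_graph_def using assms(1,2) by (intro closure_minimal) auto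
  then show ?thesis using assms(3) by auto
qed

lemma closure_graph_skew:
  assumes "(a, b) \<in> G"
  shows "inner b (\<iota> v) = - inner a (\<iota> (A v))"
  using closure_graph_closed_property[OF _ _ assms,
      of "\<lambda>p. inner (snd p) (\<iota> v) + inner (fst p) (\<iota> (A v)) = 0"] skew
  by (force intro: closed_Collect_eq continuous_intros)

lemma closure_graph_orthogonal:
  assumes "(a, b) \<in> G"
  shows "inner a b = 0"
  using closure_graph_closed_property[OF _ _ assms, of "\<lambda>p. inner (fst p) (snd p) = 0"]
    skew[of v v for v]
  by (force intro: closed_Collect_eq continuous_intros simp: inner_commute)

lemma single_valued_closure_graph: "single_valued_rel G"
  unfolding single_valued_rel_def
proof (intro allI impI)
  fix a b c assume "(a, b) \<in> G \<and> (a, c) \<in> G"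
  then have "(0, b - c) \<in> G"
    using subspace_diff[OF subspace_closure_graph, of "(a, b)" "(a, c)"] by simp
  then have "inner (b - c) y = 0" if "y \<in> range \<iota>" for y
    using that closure_graph_skew by auto
  then have "b - c = 0"
    by (rule orthogonal_dense_imp_zero[OF dense_embedding])
  then show "b = c" by simp
qed

text \<open>On the closed graph, (a, b) \<mapsto> a + b is isometric because a \<bottom> b, so its image is
  closed; orthogonality to the image forces c = 0.\<close>
lemma closure_graph_plus_surj:
  assumes "\<And>c. (\<And>v. inner c (\<iota> (A v) + \<iota> v) = 0) \<Longrightarrow> c = 0"
  obtains a b where "(a, b) \<in> G" "b + a = y"
proof -
  define f where "f p = snd p + fst p" for p :: "'a \<times> 'a"
  have bl: "bounded_linear f"
    unfolding f_def by (intro bounded_linear_intros)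
  have isometric: "norm (f p) = norm p" if "p \<in> G" for p
  proof -
    have "inner (fst p) (snd p) = 0"
      using closure_graph_orthogonal[of "fst p" "snd p"] that by simp
    then show ?thesis
      unfolding f_def norm_eq_sqrt_inner
      by (simp add: inner_add_left inner_add_right inner_commute inner_Pair_0
          inner_prod_def)
  qed
  have "complete G"
    unfolding closure_graph_def by (simp add: complete_eq_closed)
  then have "complete (f ` G)"
    using complete_isometric_image[OF zero_less_one subspace_closure_graph bl] isometric
    by simp
  moreover have "closure (f ` G) = UNIV"
    unfolding subspace_dense_iff_orthogonal_zero[OF linear_subspace_image[OF
          bounded_linear.linear[OF bl] subspace_closure_graph]]
  proof (intro allI impI)
    fix c assume "\<forall>z\<in>f ` G. inner c z = 0"
    then show "c = 0"
      using assms graph_in_closure_graph unfolding f_def by force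
  qed
  ultimately have "y \<in> f ` G"
    by (simp add: complete_eq_closed closure_closed)
  then show thesis
    using that unfolding f_def by force
qed

lemma adjoint_graph_in_closure_graph:
  assumes plus: "\<And>c. (\<And>v. inner c (\<iota> (A v) + \<iota> v) = 0) \<Longrightarrow> c = 0"
    and minus: "\<And>c. (\<And>v. inner c (\<iota> (A v) - \<iota> v) = 0) \<Longrightarrow> c = 0"
    and adjoint: "\<And>v. inner y (\<iota> v) = - inner z (\<iota> (A v))"
  shows "(z, y) \<in> G"
proof -
  obtain a b where ab: "(a, b) \<in> G" "b + a = y + z"
    using closure_graph_plus_surj[OF plus] by metis
  have "inner (z - a) (\<iota> (A v) - \<iota> v) = 0" for v
  proof -
    have "inner (z - a) (\<iota> (A v) - \<iota> v) = inner (b + a - y - z) (\<iota> v)"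
      using adjoint[of v] closure_graph_skew[OF ab(1), of v]
      by (simp add: inner_diff_left inner_diff_right inner_add_left)
    then show ?thesis using ab(2) by simp
  qed
  then have "z = a"
    using minus[of "z - a"] by simp
  with ab show ?thesis by simp
qed

lemma injective_closure_graph:
  assumes "closure (range (\<lambda>v. \<iota> (A v))) = UNIV"
  shows "injective_rel G"
  unfolding injective_rel_def
proof (intro allI impI)
  fix a a' b assume "(a, b) \<in> G \<and> (a', b) \<in> G"
  then have "(a - a', 0) \<in> G"
    using subspace_diff[OF subspace_closure_graph, of "(a, b)" "(a', b)"] by simp
  then have "inner (a - a') y = 0" if "y \<in> range (\<lambda>v. \<iota> (A v))" for y
    using that closure_graph_skew by fastforce
  then have "a - a' = 0"
    by (rule orthogonal_dense_imp_zero[OF assms])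
  then show "a = a'" by simp
qed

lemma dense_range_closure_graph:
  assumes "closure (range (\<lambda>v. \<iota> (A v))) = UNIV"
  shows "closure (snd ` G) = UNIV"
proof -
  have "range (\<lambda>v. \<iota> (A v)) \<subseteq> snd ` G"
    using graph_in_closure_graph by force
  then show ?thesis
    using closure_mono assms by blast
qed

end

locale generalized_oscillator =
  fixes \<omega> :: "'v::{real_vector,t2_space} \<Rightarrow> 'v \<Rightarrow> real"
    and \<gamma> :: "real \<Rightarrow> 'v \<Rightarrow> 'v"
    and D :: "'v \<Rightarrow> 'v"
    and \<iota>Q :: "'v \<Rightarrow> 'h::{real_inner,complete_space}"
    and \<eta> :: "'v \<Rightarrow> 'h"
  assumes locally_convex: "locally_convex TYPE('v)"
    and bilinear_omega: "bilinear \<omega>"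
    and alternating: "\<And>x. \<omega> x x = 0"
    and nondegenerate: "\<And>x. (\<And>y. \<omega> x y = 0) \<Longrightarrow> x = 0"
    and continuous_omega: "continuous_on UNIV (\<lambda>p. \<omega> (fst p) (snd p))"
    and linear_gamma: "\<And>t. linear (\<gamma> t)"
    and continuous_gamma: "\<And>t. continuous_on UNIV (\<gamma> t)"
    and symplectic_gamma: "\<And>t x y. \<omega> (\<gamma> t x) (\<gamma> t y) = \<omega> x y"
    and gamma_0: "\<And>x. \<gamma> 0 x = x"
    and gamma_add: "\<And>s t x. \<gamma> (s + t) x = \<gamma> s (\<gamma> t x)"
    and generator: "\<And>v. ((\<lambda>t. (1 / t) *\<^sub>R (\<gamma> t v - v)) \<longlongrightarrow> D v) (at 0)"
    and linear_\<iota>Q: "linear \<iota>Q"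
    and inner_\<iota>Q: "\<And>x y. inner (\<iota>Q x) (\<iota>Q y) = \<omega> (D x) y"
    and dense_\<iota>Q: "closure (range \<iota>Q) = UNIV"
    and inner_\<eta>: "\<And>x y. inner (\<eta> x) (\<iota>Q y) = \<omega> x y"
begin

lemma omega_antisym: "\<omega> x y = - \<omega> y x"
  using alternating[of "x + y"] alternating[of x] alternating[of y]
  by (simp add: bilinear_ladd[OF bilinear_omega] bilinear_radd[OF bilinear_omega])

lemma omega_D_skew: "\<omega> (D x) y = - \<omega> x (D y)"
  using inner_\<iota>Q[of x y] inner_\<iota>Q[of y x] omega_antisym[of "D y" x]
  by (simp add: inner_commute)

lemma linear_D: "linear D"
proof (rule linearI)
  fix a b
  have "\<omega> (D (a + b) - D a - D b) y = 0" for y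
    using inner_\<iota>Q[of "a + b" y] inner_\<iota>Q[of a y] inner_\<iota>Q[of b y]
    by (simp add: bilinear_lsub[OF bilinear_omega] linear_add[OF linear_\<iota>Q] inner_add_left)
  then show "D (a + b) = D a + D b"
    using nondegenerate[of "D (a + b) - D a - D b"] by (simp add: algebra_simps)
next
  fix r a
  have "\<omega> (D (r *\<^sub>R a) - r *\<^sub>R D a) y = 0" for y
    using inner_\<iota>Q[of "r *\<^sub>R a" y] inner_\<iota>Q[of a y]
    by (simp add: bilinear_lsub[OF bilinear_omega] bilinear_lmul[OF bilinear_omega]
        linear_scale[OF linear_\<iota>Q])
  then show "D (r *\<^sub>R a) = r *\<^sub>R D a"
    using nondegenerate[of "D (r *\<^sub>R a) - r *\<^sub>R D a"] by simp
qed

sublocale Q: skew_operator \<iota>Q D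
  by (rule skew_operator.intro[OF linear_\<iota>Q linear_D _ dense_\<iota>Q])
    (simp add: inner_\<iota>Q omega_D_skew)

lemma eta_D: "\<eta> (D w) = \<iota>Q w"
proof -
  have "inner (\<eta> (D w) - \<iota>Q w) y = 0" if "y \<in> range \<iota>Q" for y
    using that by (auto simp: inner_diff_left inner_\<eta> inner_\<iota>Q)
  then show ?thesis
    using orthogonal_dense_imp_zero[OF dense_\<iota>Q] by fastforce
qed

lemma linear_eta: "linear \<eta>"
proof (rule linearI)
  fix a b
  have "inner (\<eta> (a + b) - \<eta> a - \<eta> b) y = 0" if "y \<in> range \<iota>Q" for y
    using that by (auto simp: inner_diff_left inner_\<eta> bilinear_ladd[OF bilinear_omega])
  then show "\<eta> (a + b) = \<eta> a + \<eta> b"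
    using orthogonal_dense_imp_zero[OF dense_\<iota>Q] by (fastforce simp: algebra_simps)
next
  fix r a
  have "inner (\<eta> (r *\<^sub>R a) - r *\<^sub>R \<eta> a) y = 0" if "y \<in> range \<iota>Q" for y
    using that by (auto simp: inner_diff_left inner_\<eta> bilinear_lmul[OF bilinear_omega])
  then show "\<eta> (r *\<^sub>R a) = r *\<^sub>R \<eta> a"
    using orthogonal_dense_imp_zero[OF dense_\<iota>Q] by fastforce
qed

lemma dense_range_eta: "closure (range \<eta>) = UNIV"
proof -
  have "range \<iota>Q \<subseteq> range \<eta>"
    using eta_D by (metis image_subsetI rangeI)
  then show ?thesis
    using closure_mono dense_\<iota>Q by blast
qed

lemma eta_D_skew: "inner (\<eta> (D w)) (\<eta> v) = - inner (\<eta> w) (\<eta> (D v))"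
  using omega_antisym[of v w] by (simp add: eta_D inner_\<eta> inner_commute)

lemma D_gamma_commute: "D (\<gamma> t u) = \<gamma> t (D u)"
proof -
  have quotient: "(1 / h) *\<^sub>R (\<gamma> h (\<gamma> t u) - \<gamma> t u) = \<gamma> t ((1 / h) *\<^sub>R (\<gamma> h u - u))" for h
    using gamma_add[of h t u] gamma_add[of t h u]
    by (simp add: add.commute linear_scale[OF linear_gamma] linear_diff[OF linear_gamma])
  have "((\<lambda>h. \<gamma> t ((1 / h) *\<^sub>R (\<gamma> h u - u))) \<longlongrightarrow> \<gamma> t (D u)) (at 0)"
    by (rule continuous_on_tendsto_compose[OF continuous_gamma generator]) auto
  then have "((\<lambda>h. (1 / h) *\<^sub>R (\<gamma> h (\<gamma> t u) - \<gamma> t u)) \<longlongrightarrow> \<gamma> t (D u)) (at 0)"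
    by (simp only: quotient)
  then show ?thesis
    using tendsto_unique[OF trivial_limit_at generator] by blast
qed

lemma norm_\<iota>Q_gamma: "norm (\<iota>Q (\<gamma> t v)) = norm (\<iota>Q v)"
  by (simp add: norm_eq_sqrt_inner inner_\<iota>Q D_gamma_commute symplectic_gamma)

text \<open>The difference quotients of the flow converge to D u not only in V but also for Q:
  their Q-distance to D u is controlled by \<omega>, which is jointly continuous.\<close>
lemma tendsto_\<iota>Q_difference_quotient:
  "((\<lambda>h. \<iota>Q ((1 / h) *\<^sub>R (\<gamma> h u - u))) \<longlongrightarrow> \<iota>Q (D u)) (at 0)"
proof -
  define w where "w h = (1 / h) *\<^sub>R (\<gamma> h u - u) - D u" for h
  have "(w \<longlongrightarrow> 0) (at 0)"
    unfolding w_def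
    using tendsto_diff_locally_convex[OF locally_convex generator[of u] tendsto_const[of "D u"]]
    by simp
  moreover have "((\<lambda>h. D (w h)) \<longlongrightarrow> 0) (at 0)"
  proof -
    have "D (w h) = (1 / h) *\<^sub>R (\<gamma> h (D u) - D u) - D (D u)" for h
      unfolding w_def by (simp add: linear_diff[OF linear_D] linear_scale[OF linear_D] D_gamma_commute)
    then show ?thesis
      using tendsto_diff_locally_convex[OF locally_convex generator[of "D u"]
          tendsto_const[of "D (D u)"]]
      by simp
  qed
  ultimately have "((\<lambda>h. \<omega> (D (w h)) (w h)) \<longlongrightarrow> \<omega> 0 0) (at 0)"
    using continuous_on_tendsto_compose[OF continuous_omega tendsto_Pair] by fastforce
  then have "((\<lambda>h. norm (\<iota>Q (w h))) \<longlongrightarrow> 0) (at 0)"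
    using tendsto_real_sqrt
    by (fastforce simp: norm_eq_sqrt_inner inner_\<iota>Q bilinear_lzero[OF bilinear_omega])
  then have "((\<lambda>h. \<iota>Q ((1 / h) *\<^sub>R (\<gamma> h u - u)) - \<iota>Q (D u)) \<longlongrightarrow> 0) (at 0)"
    by (simp add: tendsto_norm_zero_iff w_def linear_diff[OF linear_\<iota>Q])
  then show ?thesis
    by (simp add: Lim_null[symmetric])
qed

lemma orthogonal_range_D_plus_eq_0:
  assumes "s \<noteq> 0" and orth: "\<And>v. inner c (\<iota>Q (D v) + s *\<^sub>R \<iota>Q v) = 0"
  shows "c = 0"
proof -
  have "inner c (\<iota>Q v) = 0" for v
  proof -
    define g where "g t = inner c (\<iota>Q (\<gamma> t v))" for t
    have "(g has_real_derivative - s * g t) (at t)" for t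
    proof -
      have "inner c (\<iota>Q ((1 / h) *\<^sub>R (\<gamma> h (\<gamma> t v) - \<gamma> t v))) = (g (t + h) - g t) / h" for h
        using gamma_add[of h t v]
        by (simp add: g_def add.commute linear_scale[OF linear_\<iota>Q] linear_diff[OF linear_\<iota>Q]
            inner_diff_right divide_inverse mult.commute)
      moreover have "inner c (\<iota>Q (D (\<gamma> t v))) = - s * g t"
        using orth[of "\<gamma> t v"] by (simp add: g_def inner_add_right)
      moreover have "((\<lambda>h. inner c (\<iota>Q ((1 / h) *\<^sub>R (\<gamma> h (\<gamma> t v) - \<gamma> t v))))
          \<longlongrightarrow> inner c (\<iota>Q (D (\<gamma> t v)))) (at 0)"
        by (intro tendsto_inner tendsto_const tendsto_\<iota>Q_difference_quotient)
      ultimately show ?thesis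
        by (simp add: DERIV_def)
    qed
    moreover have "\<bar>g t\<bar> \<le> norm c * norm (\<iota>Q v)" for t
      unfolding g_def using Cauchy_Schwarz_ineq2[of c "\<iota>Q (\<gamma> t v)"] norm_\<iota>Q_gamma by simp
    ultimately have "g 0 = 0"
      using \<open>s \<noteq> 0\<close> by (intro bounded_solution_of_linear_ode_eq_0[of "- s"]) auto
    then show ?thesis
      by (simp add: g_def gamma_0)
  qed
  then show ?thesis
    using orthogonal_dense_imp_zero[OF dense_\<iota>Q] by blast
qed

lemma eta_in_closure_graph: "(\<eta> x, \<iota>Q x) \<in> closure_graph \<iota>Q D"
proof (rule Q.adjoint_graph_in_closure_graph)
  show "c = 0" if "\<And>v. inner c (\<iota>Q (D v) + \<iota>Q v) = 0" for c
    using orthogonal_range_D_plus_eq_0[of 1 c] that by simp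
  show "c = 0" if "\<And>v. inner c (\<iota>Q (D v) - \<iota>Q v) = 0" for c
    using orthogonal_range_D_plus_eq_0[of "-1" c] that by simp
  show "inner (\<iota>Q x) (\<iota>Q v) = - inner (\<eta> x) (\<iota>Q (D v))" for v
    by (simp add: inner_\<iota>Q inner_\<eta> omega_D_skew)
qed

end

theorem lemma3p10:
  fixes \<omega> :: "'v::{real_vector,t2_space} \<Rightarrow> 'v \<Rightarrow> real"
    and \<gamma> :: "real \<Rightarrow> 'v \<Rightarrow> 'v"
    and D :: "'v \<Rightarrow> 'v"
    and \<iota>Q :: "'v \<Rightarrow> 'h::{real_inner,complete_space}"
    and \<eta> :: "'v \<Rightarrow> 'h"
    and \<iota>K :: "'v \<Rightarrow> 'k::{real_inner,complete_space}"
  assumes lcs: "locally_convex TYPE('v)"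
    and \<omega>_bilinear: "bilinear \<omega>"
    and \<omega>_alt: "\<forall>x. \<omega> x x = 0"
    and \<omega>_nondeg: "\<forall>x. (\<forall>y. \<omega> x y = 0) \<longrightarrow> x = 0"
    and \<omega>_cont: "continuous_on UNIV (\<lambda>p::'v \<times> 'v. \<omega> (fst p) (snd p))"
    and action: "smooth_symplectic_action \<omega> \<gamma>"
    and D_def: "\<forall>v. ((\<lambda>t. (1 / t) *\<^sub>R (\<gamma> t v - v)) \<longlongrightarrow> D v) (at 0)"
    \<comment> \<open>(C1) Q(x,y) = \<omega>(Dx,y) is positive definite\<close>
    and C1: "\<forall>x. x \<noteq> 0 \<longrightarrow> \<omega> (D x) x > 0"
    \<comment> \<open>(C2) every \<omega>(x,.) is Q-continuous\<close>
    and C2: "\<forall>x. bdd_above ((\<lambda>v. \<omega> x v) ` {v. \<omega> (D v) v \<le> 1})"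
    \<comment> \<open>V_Q: Hilbert completion of (V,Q), V embedded densely via \<iota>Q\<close>
    and \<iota>Q_lin: "linear \<iota>Q"
    and \<iota>Q_inner: "\<forall>x y. inner (\<iota>Q x) (\<iota>Q y) = \<omega> (D x) y"
    and \<iota>Q_dense: "closure (range \<iota>Q) = UNIV"
    \<comment> \<open>\<eta> : V \<rightarrow> V_Q with Q(\<eta> x, y) = \<omega>(x,y)\<close>
    and \<eta>_def: "\<forall>x y. inner (\<eta> x) (\<iota>Q y) = \<omega> x y"
    \<comment> \<open>(C3) \<eta> is continuous\<close>
    and C3: "continuous_on UNIV \<eta>"
    \<comment> \<open>V_\<kappa>: Hilbert completion of (V,\<kappa>), \<kappa>(x,y) = Q(\<eta> x, \<eta> y)\<close>
    and \<iota>K_lin: "linear \<iota>K"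
    and \<iota>K_inner: "\<forall>x y. inner (\<iota>K x) (\<iota>K y) = inner (\<eta> x) (\<eta> y)"
    and \<iota>K_dense: "closure (range \<iota>K) = UNIV"
  shows "single_valued_rel (closure_graph \<iota>Q D)
       \<and> (\<forall>x. (\<eta> x, \<iota>Q x) \<in> closure_graph \<iota>Q D)
       \<and> (\<forall>x y. norm (\<eta> x - \<eta> y) = norm (\<iota>K x - \<iota>K y))
       \<and> (\<exists>\<eta>h :: 'k \<Rightarrow> 'h. linear \<eta>h \<and> bij \<eta>h \<and> (\<forall>u w. inner (\<eta>h u) (\<eta>h w) = inner u w)
            \<and> (\<forall>x. \<eta>h (\<iota>K x) = \<eta> x)
            \<and> (\<forall>x. (\<eta>h (\<iota>K x), \<eta>h (\<iota>K (D x))) \<in> closure_graph \<iota>Q D))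
       \<and> single_valued_rel (closure_graph \<iota>K D)
       \<and> injective_rel (closure_graph \<iota>K D)
       \<and> closure (snd ` closure_graph \<iota>K D) = UNIV"
proof -
  have flow: "linear (\<gamma> t)" "continuous_on UNIV (\<gamma> t)" "\<omega> (\<gamma> t x) (\<gamma> t y) = \<omega> x y"
    "\<gamma> 0 x = x" "\<gamma> (s + t) x = \<gamma> s (\<gamma> t x)" for s t x y
    using action unfolding smooth_symplectic_action_def symplectic_group_def by auto
  interpret generalized_oscillator \<omega> \<gamma> D \<iota>Q \<eta>
    by (rule generalized_oscillator.intro)
      (use lcs \<omega>_bilinear \<omega>_alt \<omega>_nondeg \<omega>_cont flow D_def \<iota>Q_lin \<iota>Q_inner \<iota>Q_dense \<eta>_def in auto)
  obtain g :: "'k \<Rightarrow> 'h" where g: "linear g" "bij g" "\<And>u w. inner (g u) (g w) = inner u w"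
    and g_\<iota>K: "\<And>x. g (\<iota>K x) = \<eta> x"
    using unitary_extension[OF \<iota>K_lin linear_eta _ \<iota>K_dense dense_range_eta] \<iota>K_inner by metis
  interpret K: skew_operator \<iota>K D
    by (rule skew_operator.intro[OF \<iota>K_lin linear_D _ \<iota>K_dense]) (simp add: \<iota>K_inner eta_D_skew)
  have "closure (range (\<lambda>v. \<iota>K (D v))) = UNIV"
  proof (rule dense_if_inner_preserving_image_dense[OF g(1,3)])
    show "subspace (range (\<lambda>v. \<iota>K (D v)))"
      using linear_compose[OF linear_D \<iota>K_lin] by (simp add: linear_subspace_image o_def)
    show "closure (g ` range (\<lambda>v. \<iota>K (D v))) = UNIV"
      using dense_\<iota>Q by (simp add: image_image g_\<iota>K eta_D)
  qed
  moreover have "norm (\<eta> x - \<eta> y) = norm (\<iota>K x - \<iota>K y)" for x y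
    using \<iota>K_inner[rule_format, of "x - y" "x - y"]
    by (simp add: norm_eq_sqrt_inner linear_diff[OF \<iota>K_lin] linear_diff[OF linear_eta])
  moreover have "\<exists>\<eta>h :: 'k \<Rightarrow> 'h. linear \<eta>h \<and> bij \<eta>h \<and> (\<forall>u w. inner (\<eta>h u) (\<eta>h w) = inner u w)
      \<and> (\<forall>x. \<eta>h (\<iota>K x) = \<eta> x) \<and> (\<forall>x. (\<eta>h (\<iota>K x), \<eta>h (\<iota>K (D x))) \<in> closure_graph \<iota>Q D)"
    using g g_\<iota>K eta_D eta_in_closure_graph by (intro exI[of _ g]) simp
  ultimately show ?thesis
    using Q.single_valued_closure_graph eta_in_closure_graph K.single_valued_closure_graph
      K.injective_closure_graph K.dense_range_closure_graph
    by blast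
qed
end
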